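(* Let $1\leq n\leq N$ and let $R_N$ be a rejective sampling design of size $n$ with canonical parameters $\mathbf{p}_N=(p_1,\ldots,p_N)\in(0,1)^N$, $\sum_{i=1}^Np_i=n$, and first-order inclusion probabilities $\pi_1,\ldots,\pi_N$. Let $d_N=\sum_{i=1}^Np_i(1-p_i)$ and suppose $d_N\geq1$. Then for all $i\in\{1,\ldots,N\}$, $$\left|\frac1{\pi_i}-\frac1{p_i}\right|\leq\frac{6}{d_N}\cdot\frac{1-\pi_i}{\pi_i}.$$
   Context: A rejective design of size $n$ on $\{1,\ldots,N\}$ with canonical parameters $\mathbf{p}_N$ (satisfying $\sum_ip_i=n$) is the distribution of a random subset $S$ with $\mathbb{P}(S=s)=C\prod_{i\in s}p_i\prod_{i\notin s}(1-p_i)$ if $\#s=n$ and $0$ otherwise, $C$ a normalizing constant; $\pi_i=\mathbb{P}(i\in S)$. *)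

theory Defs
  imports "HOL-Analysis.Analysis"
begin

definition rej_weight :: "nat \<Rightarrow> (nat \<Rightarrow> real) \<Rightarrow> nat set \<Rightarrow> real" where
  "rej_weight N p s = (\<Prod>i\<in>s. p i) * (\<Prod>i\<in>{1..N} - s. 1 - p i)"

definition rej_samples :: "nat \<Rightarrow> nat \<Rightarrow> nat set set" where
  "rej_samples N n = {s. s \<subseteq> {1..N} \<and> card s = n}"

definition rej_prob :: "nat \<Rightarrow> nat \<Rightarrow> (nat \<Rightarrow> real) \<Rightarrow> nat set \<Rightarrow> real" where
  "rej_prob N n p s =
     (if s \<in> rej_samples N n
      then rej_weight N p s / (\<Sum>t\<in>rej_samples N n. rej_weight N p t)
      else 0)"

definition rej_incl :: "nat \<Rightarrow> nat \<Rightarrow> (nat \<Rightarrow> real) \<Rightarrow> nat \<Rightarrow> real" where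
  "rej_incl N n p i = (\<Sum>s\<in>{s\<in>rej_samples N n. i \<in> s}. rej_prob N n p s)"

end

theory Submission
  imports Defs
begin

text \<open>Let \<open>c\<close> be the Poisson-binomial law of the number of successes among the units other
  than \<open>i\<close>. Splitting the rejective weight according to whether \<open>i\<close> is drawn gives
  \<open>\<pi>\<^sub>i = p\<^sub>i c(n-1) / (p\<^sub>i c(n-1) + (1-p\<^sub>i) c(n))\<close>, hence
  \<open>1/\<pi>\<^sub>i - 1/p\<^sub>i = (1-\<pi>\<^sub>i)/\<pi>\<^sub>i \<cdot> (1 - x)\<close> with \<open>x = c(n-1)/c(n)\<close>, and it remains to show
  \<open>\<bar>1 - x\<bar> \<le> 6/d\<close>. The identity \<open>(k - \<mu>) c(k) = \<Sum>\<^sub>j p\<^sub>j(1-p\<^sub>j)(c\<^sub>j(k-1) - c\<^sub>j(k))\<close>, where \<open>c\<^sub>j\<close> leaves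
  out unit \<open>j\<close> as well, combined with log-concavity of the \<open>c\<^sub>j\<close>, traps
  \<open>\<Sum>\<^sub>j p\<^sub>j(1-p\<^sub>j)(x-1)/(1-p\<^sub>j+p\<^sub>j x)\<close> between \<open>p\<^sub>i - 1\<close> and \<open>p\<^sub>i\<close>. This gives the bound directly
  unless \<open>d < 6/5\<close> and \<open>x \<ge> 6\<close>. In that case \<open>c\<close> drops by a factor \<open>6\<close> just above its mean
  \<open>n - p\<^sub>i\<close>, log-concavity makes both tails decay geometrically, and the variance
  \<open>d - p\<^sub>i(1-p\<^sub>i)\<close> of \<open>c\<close> would be below \<open>3/4\<close>, contradicting \<open>d \<ge> 1\<close>.\<close>

section \<open>The Poisson-binomial distribution\<close>

definition subset_weight :: "(nat \<Rightarrow> real) \<Rightarrow> nat set \<Rightarrow> nat set \<Rightarrow> real" where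
  "subset_weight p U s = (\<Prod>i\<in>s. p i) * (\<Prod>i\<in>U - s. 1 - p i)"

text \<open>Indexed by integers so that shifts like \<open>k - 1\<close> are not truncated; it vanishes outside
  \<open>{0..card U}\<close>.\<close>

definition poisson_binomial :: "(nat \<Rightarrow> real) \<Rightarrow> nat set \<Rightarrow> int \<Rightarrow> real" where
  "poisson_binomial p U k = (\<Sum>s\<in>{s. s \<subseteq> U \<and> int (card s) = k}. subset_weight p U s)"

lemma sum_subset_weight_containing:
  assumes "finite U" "a \<notin> U"
  shows "(\<Sum>s\<in>{s. s \<subseteq> insert a U \<and> int (card s) = k \<and> a \<in> s}. subset_weight p (insert a U) s)
         = p a * poisson_binomial p U (k - 1)"
proof -
  have sets: "{s. s \<subseteq> insert a U \<and> int (card s) = k \<and> a \<in> s}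
        = insert a ` {t. t \<subseteq> U \<and> int (card t) = k - 1}"
  proof (intro set_eqI iffI)
    fix s assume s: "s \<in> {s. s \<subseteq> insert a U \<and> int (card s) = k \<and> a \<in> s}"
    hence "finite s" using assms(1) finite_subset by auto
    hence "card s > 0" using s by (auto simp: card_gt_0_iff)
    hence "int (card (s - {a})) = k - 1"
      using s \<open>finite s\<close> by (simp add: card_Diff_singleton of_nat_diff)
    moreover have "s - {a} \<subseteq> U" "s = insert a (s - {a})" using s by auto
    ultimately show "s \<in> insert a ` {t. t \<subseteq> U \<and> int (card t) = k - 1}" by blast
  next
    fix s assume "s \<in> insert a ` {t. t \<subseteq> U \<and> int (card t) = k - 1}"
    then obtain t where t: "t \<subseteq> U" "int (card t) = k - 1" "s = insert a t" by auto
    have "finite t" "a \<notin> t" using t assms finite_subset by auto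
    thus "s \<in> {s. s \<subseteq> insert a U \<and> int (card s) = k \<and> a \<in> s}" using t by auto
  qed
  have inj: "inj_on (insert a) {t. t \<subseteq> U \<and> int (card t) = k - 1}"
    unfolding inj_on_def using assms(2) by (metis (no_types, lifting) insert_ident mem_Collect_eq subsetD)
  have weight: "subset_weight p (insert a U) (insert a t) = p a * subset_weight p U t" if "t \<subseteq> U" for t
  proof -
    have "finite t" "a \<notin> t" "insert a U - insert a t = U - t"
      using that assms finite_subset by auto
    thus ?thesis unfolding subset_weight_def using assms by simp
  qed
  show ?thesis unfolding sets poisson_binomial_def
    by (simp add: sum.reindex[OF inj] weight sum_distrib_left)
qed

lemma sum_subset_weight_avoiding:
  assumes "finite U" "a \<notin> U"
  shows "(\<Sum>s\<in>{s. s \<subseteq> insert a U \<and> int (card s) = k \<and> a \<notin> s}. subset_weight p (insert a U) s)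
         = (1 - p a) * poisson_binomial p U k"
proof -
  have sets: "{s. s \<subseteq> insert a U \<and> int (card s) = k \<and> a \<notin> s} = {s. s \<subseteq> U \<and> int (card s) = k}"
    using assms by auto
  have weight: "subset_weight p (insert a U) s = (1 - p a) * subset_weight p U s" if "s \<subseteq> U" for s
  proof -
    have "insert a U - s = insert a (U - s)" "a \<notin> U - s" using that assms by auto
    thus ?thesis unfolding subset_weight_def using assms by simp
  qed
  show ?thesis unfolding sets poisson_binomial_def by (simp add: weight sum_distrib_left)
qed

lemma poisson_binomial_insert:
  assumes "finite U" "a \<notin> U"
  shows "poisson_binomial p (insert a U) k
           = p a * poisson_binomial p U (k - 1) + (1 - p a) * poisson_binomial p U k"
proof -
  let ?S = "{s. s \<subseteq> insert a U \<and> int (card s) = k}"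
  have "finite ?S" using assms by simp
  moreover have "?S = {s \<in> ?S. a \<in> s} \<union> {s \<in> ?S. a \<notin> s}" by auto
  ultimately have "poisson_binomial p (insert a U) k
      = (\<Sum>s\<in>{s \<in> ?S. a \<in> s}. subset_weight p (insert a U) s)
        + (\<Sum>s\<in>{s \<in> ?S. a \<notin> s}. subset_weight p (insert a U) s)"
    unfolding poisson_binomial_def by (metis (no_types, lifting) sum.union_disjoint disjoint_iff
        finite_Un mem_Collect_eq)
  also have "\<dots> = p a * poisson_binomial p U (k - 1) + (1 - p a) * poisson_binomial p U k"
    using sum_subset_weight_containing[OF assms] sum_subset_weight_avoiding[OF assms]
    by (simp add: conj_assoc)
  finally show ?thesis .
qed

lemma poisson_binomial_empty: "poisson_binomial p {} k = (if k = 0 then 1 else 0)"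
proof -
  have "{s. s \<subseteq> ({}::nat set) \<and> int (card s) = k} = (if k = 0 then {{}} else {})" by auto
  thus ?thesis unfolding poisson_binomial_def subset_weight_def by simp
qed

lemma poisson_binomial_nonneg:
  assumes "\<And>i. i \<in> U \<Longrightarrow> 0 \<le> p i \<and> p i \<le> 1"
  shows "0 \<le> poisson_binomial p U k"
  unfolding poisson_binomial_def subset_weight_def
  using assms by (intro sum_nonneg mult_nonneg_nonneg prod_nonneg) auto

lemma poisson_binomial_eq_0:
  assumes "finite U" "k < 0 \<or> k > int (card U)"
  shows "poisson_binomial p U k = 0"
proof -
  have none: "{s. s \<subseteq> U \<and> int (card s) = k} = {}"
  proof (rule ccontr)
    assume "{s. s \<subseteq> U \<and> int (card s) = k} \<noteq> {}"
    then obtain s where "s \<subseteq> U" "int (card s) = k" by blast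
    thus False using card_mono[OF assms(1) \<open>s \<subseteq> U\<close>] assms(2) by linarith
  qed
  show ?thesis unfolding poisson_binomial_def none by simp
qed

lemma poisson_binomial_pos:
  assumes "finite U" "\<And>i. i \<in> U \<Longrightarrow> 0 < p i \<and> p i < 1" "0 \<le> k" "k \<le> int (card U)"
  shows "0 < poisson_binomial p U k"
  using assms
proof (induction U arbitrary: k rule: finite_induct)
  case empty
  thus ?case by (simp add: poisson_binomial_empty)
next
  case (insert a U)
  have pa: "0 < p a" "p a < 1" using insert.prems by auto
  have nonneg: "0 \<le> poisson_binomial p U j" for j
    by (rule poisson_binomial_nonneg) (use insert.prems in force)
  have rec: "poisson_binomial p (insert a U) k
      = p a * poisson_binomial p U (k - 1) + (1 - p a) * poisson_binomial p U k"
    by (rule poisson_binomial_insert) (use insert in auto)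
  show ?case
  proof (cases "k \<le> int (card U)")
    case True
    have "0 < poisson_binomial p U k" by (rule insert.IH) (use insert.prems True in auto)
    thus ?thesis unfolding rec using pa nonneg[of "k - 1"] by (simp add: add_nonneg_pos)
  next
    case False
    have "0 < poisson_binomial p U (k - 1)"
      by (rule insert.IH) (use insert.prems insert.hyps False in auto)
    thus ?thesis unfolding rec using pa nonneg[of k] by (simp add: add_pos_nonneg)
  qed
qed

lemma log_concave_cross:
  fixes c :: "int \<Rightarrow> real"
  assumes nonneg: "\<And>j. 0 \<le> c j" and pos: "\<And>j. 0 < c j \<longleftrightarrow> 0 \<le> j \<and> j \<le> m"
    and lc: "\<And>j. c (j - 1) * c (j + 1) \<le> c j ^ 2"
  shows "c (k - 2) * c (k + 1) \<le> c (k - 1) * c k"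
proof (cases "c (k - 2) = 0 \<or> c (k + 1) = 0")
  case True
  thus ?thesis using nonneg[of "k - 1"] nonneg[of k] by auto
next
  case False
  hence "0 < c (k - 2)" "0 < c (k + 1)" using nonneg[of "k - 2"] nonneg[of "k + 1"] by auto
  hence "0 < c (k - 1)" "0 < c k" using pos[of "k - 2"] pos[of "k + 1"] pos[of "k - 1"] pos[of k] by auto
  moreover have "(c (k - 2) * c (k + 1)) * (c (k - 1) * c k)
                 = (c (k - 2) * c k) * (c (k - 1) * c (k + 1))"
    by (simp add: algebra_simps)
  moreover have "\<dots> \<le> c (k - 1) ^ 2 * c k ^ 2"
  proof (rule mult_mono)
    show "c (k - 2) * c k \<le> c (k - 1) ^ 2" using lc[of "k - 1"] by (simp add: algebra_simps)
    show "c (k - 1) * c (k + 1) \<le> c k ^ 2" using lc[of k] by simp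
  qed (use nonneg in auto)
  moreover have "c (k - 1) ^ 2 * c k ^ 2 = (c (k - 1) * c k) * (c (k - 1) * c k)"
    by (simp add: power2_eq_square algebra_simps)
  ultimately show ?thesis by (simp add: mult_le_cancel_right)
qed

text \<open>Newton's inequalities for the elementary symmetric polynomials of the \<open>p i / (1 - p i)\<close>.\<close>

lemma poisson_binomial_log_concave:
  assumes "finite U" "\<And>i. i \<in> U \<Longrightarrow> 0 < p i \<and> p i < 1"
  shows "poisson_binomial p U (k - 1) * poisson_binomial p U (k + 1) \<le> poisson_binomial p U k ^ 2"
  using assms
proof (induction U arbitrary: k rule: finite_induct)
  case empty
  thus ?case by (simp add: poisson_binomial_empty)
next
  case (insert a U)
  let ?c = "poisson_binomial p U"
  have pa: "0 < p a" "p a < 1" using insert.prems by auto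
  have nonneg: "\<And>j. 0 \<le> ?c j" by (rule poisson_binomial_nonneg) (use insert.prems in force)
  have pos: "0 < ?c j \<longleftrightarrow> 0 \<le> j \<and> j \<le> int (card U)" for j
    using poisson_binomial_pos[OF insert.hyps(1), of p] poisson_binomial_eq_0[OF insert.hyps(1), of _ p]
      insert.prems by (cases "0 \<le> j \<and> j \<le> int (card U)") auto
  have lc: "\<And>j. ?c (j - 1) * ?c (j + 1) \<le> ?c j ^ 2" using insert by auto
  have cross: "?c (k - 2) * ?c (k + 1) \<le> ?c (k - 1) * ?c k"
    by (rule log_concave_cross[OF nonneg pos lc])
  have rec: "\<And>j. poisson_binomial p (insert a U) j = p a * ?c (j - 1) + (1 - p a) * ?c j"
    by (rule poisson_binomial_insert) (use insert in auto)
  have lc1: "?c (k - 2) * ?c k \<le> ?c (k - 1) ^ 2" using lc[of "k - 1"] by (simp add: algebra_simps)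
  have shifts: "k - 1 - 1 = k - 2" "k + 1 - 1 = k" "k - 1 + 1 = k" by auto
  have "poisson_binomial p (insert a U) k ^ 2
        - poisson_binomial p (insert a U) (k - 1) * poisson_binomial p (insert a U) (k + 1)
      = p a ^ 2 * (?c (k - 1) ^ 2 - ?c (k - 2) * ?c k)
        + (1 - p a) ^ 2 * (?c k ^ 2 - ?c (k - 1) * ?c (k + 1))
        + p a * (1 - p a) * (?c (k - 1) * ?c k - ?c (k - 2) * ?c (k + 1))"
    unfolding rec shifts by (simp add: algebra_simps power2_eq_square)
  also have "\<dots> \<ge> 0"
    using lc1 lc[of k] cross pa by (intro add_nonneg_nonneg mult_nonneg_nonneg) auto
  finally show ?case by simp
qed

lemma sum_poisson_binomial_insert:
  assumes "finite U" "a \<notin> U"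
  shows "(\<Sum>k=0..Suc (card U). f k * poisson_binomial p (insert a U) (int k))
       = p a * (\<Sum>k=0..card U. f (Suc k) * poisson_binomial p U (int k))
         + (1 - p a) * (\<Sum>k=0..card U. f k * poisson_binomial p U (int k))"
proof -
  let ?m = "card U" and ?c = "poisson_binomial p U"
  have "(\<Sum>k=0..Suc ?m. f k * poisson_binomial p (insert a U) (int k))
      = (\<Sum>k=0..Suc ?m. p a * (f k * ?c (int k - 1)) + (1 - p a) * (f k * ?c (int k)))"
    by (rule sum.cong) (simp_all add: poisson_binomial_insert[OF assms] algebra_simps)
  also have "\<dots> = p a * (\<Sum>k=0..Suc ?m. f k * ?c (int k - 1)) + (1 - p a) * (\<Sum>k=0..Suc ?m. f k * ?c (int k))"
    by (simp add: sum.distrib sum_distrib_left del: sum.cl_ivl_Suc)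
  also have "(\<Sum>k=0..Suc ?m. f k * ?c (int k - 1)) = (\<Sum>k=0..?m. f (Suc k) * ?c (int k))"
    using poisson_binomial_eq_0[OF assms(1), of "-1" p]
    by (simp only: sum.atLeast0_atMost_Suc_shift comp_def) simp
  also have "(\<Sum>k=0..Suc ?m. f k * ?c (int k)) = (\<Sum>k=0..?m. f k * ?c (int k))"
    using poisson_binomial_eq_0[OF assms(1), of "int (Suc ?m)" p] by simp
  finally show ?thesis .
qed

lemma poisson_binomial_moments:
  assumes "finite U"
  shows "(\<Sum>k=0..card U. poisson_binomial p U (int k)) = 1"
    and "(\<Sum>k=0..card U. real k * poisson_binomial p U (int k)) = (\<Sum>i\<in>U. p i)"
    and "(\<Sum>k=0..card U. real k ^ 2 * poisson_binomial p U (int k))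
           = (\<Sum>i\<in>U. p i) ^ 2 + (\<Sum>i\<in>U. p i * (1 - p i))"
proof -
  have "(\<Sum>k=0..card U. poisson_binomial p U (int k)) = 1 \<and>
        (\<Sum>k=0..card U. real k * poisson_binomial p U (int k)) = (\<Sum>i\<in>U. p i) \<and>
        (\<Sum>k=0..card U. real k ^ 2 * poisson_binomial p U (int k))
           = (\<Sum>i\<in>U. p i) ^ 2 + (\<Sum>i\<in>U. p i * (1 - p i))"
    using assms
  proof (induction U rule: finite_induct)
    case empty
    thus ?case by (simp add: poisson_binomial_empty)
  next
    case (insert a U)
    let ?c = "poisson_binomial p U"
    have sum_Suc: "(\<Sum>k=0..card U. real (Suc k) * ?c (int k))
        = (\<Sum>k=0..card U. ?c (int k)) + (\<Sum>k=0..card U. real k * ?c (int k))"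
      by (simp add: sum.distrib algebra_simps)
    have sum_Suc2: "(\<Sum>k=0..card U. real (Suc k) ^ 2 * ?c (int k))
        = (\<Sum>k=0..card U. real k ^ 2 * ?c (int k)) + 2 * (\<Sum>k=0..card U. real k * ?c (int k))
          + (\<Sum>k=0..card U. ?c (int k))"
      by (simp add: sum.distrib sum_distrib_left algebra_simps power2_eq_square)
    show ?case
      using sum_poisson_binomial_insert[OF insert.hyps, of "\<lambda>k. 1" p]
        sum_poisson_binomial_insert[OF insert.hyps, of "\<lambda>k. real k" p]
        sum_poisson_binomial_insert[OF insert.hyps, of "\<lambda>k. real k ^ 2" p]
        sum_Suc sum_Suc2 insert.IH insert.hyps
      by (simp add: algebra_simps power2_eq_square)
  qed
  thus "(\<Sum>k=0..card U. poisson_binomial p U (int k)) = 1"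
    and "(\<Sum>k=0..card U. real k * poisson_binomial p U (int k)) = (\<Sum>i\<in>U. p i)"
    and "(\<Sum>k=0..card U. real k ^ 2 * poisson_binomial p U (int k))
           = (\<Sum>i\<in>U. p i) ^ 2 + (\<Sum>i\<in>U. p i * (1 - p i))"
    by simp_all
qed

text \<open>A discrete analogue of the differential identity for the generating polynomial
  \<open>\<Prod>j. (1 - p j + p j * z)\<close>.\<close>

lemma poisson_binomial_mean_identity:
  assumes "finite U"
  shows "(of_int k - (\<Sum>i\<in>U. p i)) * poisson_binomial p U k
       = (\<Sum>j\<in>U. p j * (1 - p j)
            * (poisson_binomial p (U - {j}) (k - 1) - poisson_binomial p (U - {j}) k))"
  using assms
proof (induction U arbitrary: k rule: finite_induct)
  case empty
  thus ?case by (simp add: poisson_binomial_empty)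
next
  case (insert a U)
  let ?c = "\<lambda>V. poisson_binomial p V"
  have rec: "?c (insert a U) t = p a * ?c U (t - 1) + (1 - p a) * ?c U t" for t
    by (rule poisson_binomial_insert) (use insert in auto)
  have rec_minus: "?c (insert a U - {j}) t
      = p a * ?c (U - {j}) (t - 1) + (1 - p a) * ?c (U - {j}) t" if "j \<in> U" for j t
  proof -
    have "insert a U - {j} = insert a (U - {j})" using that insert.hyps by auto
    thus ?thesis using poisson_binomial_insert[of "U - {j}" a p t] insert.hyps by auto
  qed
  have "(\<Sum>j\<in>insert a U. p j * (1 - p j) * (?c (insert a U - {j}) (k - 1) - ?c (insert a U - {j}) k))
      = p a * (1 - p a) * (?c U (k - 1) - ?c U k)
        + (\<Sum>j\<in>U. p j * (1 - p j) * (?c (insert a U - {j}) (k - 1) - ?c (insert a U - {j}) k))"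
    using insert.hyps by (simp add: insert_Diff_if)
  also have "(\<Sum>j\<in>U. p j * (1 - p j) * (?c (insert a U - {j}) (k - 1) - ?c (insert a U - {j}) k))
      = p a * (\<Sum>j\<in>U. p j * (1 - p j) * (?c (U - {j}) (k - 1 - 1) - ?c (U - {j}) (k - 1)))
        + (1 - p a) * (\<Sum>j\<in>U. p j * (1 - p j) * (?c (U - {j}) (k - 1) - ?c (U - {j}) k))"
    by (simp add: rec_minus sum_distrib_left sum.distrib[symmetric] algebra_simps cong: sum.cong)
  also have "\<dots> = p a * ((of_int (k - 1) - (\<Sum>i\<in>U. p i)) * ?c U (k - 1))
                  + (1 - p a) * ((of_int k - (\<Sum>i\<in>U. p i)) * ?c U k)"
    using insert.IH[of "k - 1"] insert.IH[of k] by simp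
  finally show ?case using insert.hyps by (simp add: rec algebra_simps)
qed

section \<open>Log-concave sequences with a steep drop\<close>

text \<open>Abel summation against a weight \<open>h\<close>: it turns the ratio bound
  \<open>w (Suc y) \<le> t * w y\<close> into linear bounds on weighted tail sums.\<close>

lemma summation_by_parts_ratio_nonneg:
  fixes w h :: "nat \<Rightarrow> real" and t :: real
  assumes "\<And>y. 0 \<le> h y" "0 \<le> t" "\<And>y. 0 \<le> w y" "\<And>y. y < L \<Longrightarrow> w (Suc y) \<le> t * w y"
  shows "0 \<le> t * h 0 * w 0 + (\<Sum>y<L. (t * h (Suc y) - h y) * w (Suc y))"
proof -
  have "(\<Sum>y<L. h y * (t * w y - w (Suc y))) + t * h L * w L
      = t * h 0 * w 0 + (\<Sum>y<L. (t * h (Suc y) - h y) * w (Suc y))"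
    by (induction L) (simp_all add: algebra_simps)
  moreover have "0 \<le> (\<Sum>y<L. h y * (t * w y - w (Suc y))) + t * h L * w L"
    using assms by (intro add_nonneg_nonneg sum_nonneg mult_nonneg_nonneg) auto
  ultimately show ?thesis by simp
qed

lemma sum_index_weighted_le_ratio:
  fixes w :: "nat \<Rightarrow> real" and t :: real
  assumes "0 \<le> t" "t < 1" "\<And>y. 0 \<le> w y" "\<And>y. y < L \<Longrightarrow> w (Suc y) \<le> t * w y"
  shows "(\<Sum>y<L. real (Suc y) * w (Suc y)) \<le> t / (1 - t)^2 * w 0"
proof -
  define h where "h y = 1 / (1 - t)^2 + real y / (1 - t)" for y
  have "0 \<le> h y" for y using assms(2) unfolding h_def by auto
  hence "0 \<le> t * h 0 * w 0 + (\<Sum>y<L. (t * h (Suc y) - h y) * w (Suc y))"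
    using assms by (intro summation_by_parts_ratio_nonneg) auto
  moreover have "t * h (Suc y) - h y = - real (Suc y)" for y
  proof -
    have "t * h (Suc y) - h y
        = ((1 - (1 - t)) * (1 + (real y + 1) * (1 - t)) - 1 - real y * (1 - t)) / (1 - t)^2"
      unfolding h_def using assms(2) by (simp add: field_simps power2_eq_square)
    also have "(1 - (1 - t)) * (1 + (real y + 1) * (1 - t)) - 1 - real y * (1 - t)
        = - (real y + 1) * (1 - t)^2"
      by (simp add: algebra_simps power2_eq_square)
    finally show ?thesis using assms(2) by simp
  qed
  hence "(\<Sum>y<L. (t * h (Suc y) - h y) * w (Suc y)) = - (\<Sum>y<L. real (Suc y) * w (Suc y))"
    by (simp only: sum_negf[symmetric] mult_minus_left)
  moreover have "t * h 0 = t / (1 - t)^2" unfolding h_def by simp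
  ultimately show ?thesis by simp
qed

lemma sum_index_sq_weighted_le_ratio:
  fixes w :: "nat \<Rightarrow> real" and t :: real
  assumes "0 \<le> t" "\<And>y. 0 \<le> w y" "\<And>y. y < L \<Longrightarrow> w (Suc y) \<le> t * w y"
  shows "(1 - t) * (\<Sum>y<L. real (Suc y) * real y * w (Suc y))
           \<le> 2 * t * (\<Sum>y<L. real (Suc y) * w (Suc y))"
proof -
  define h where "h y = real y * (real y + 1)" for y
  have "0 \<le> t * h 0 * w 0 + (\<Sum>y<L. (t * h (Suc y) - h y) * w (Suc y))"
    using assms by (intro summation_by_parts_ratio_nonneg) (auto simp: h_def)
  moreover have "(t * h (Suc y) - h y) * w (Suc y)
      = 2 * t * (real (Suc y) * w (Suc y)) - (1 - t) * (real (Suc y) * real y * w (Suc y))" for y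
    unfolding h_def by (simp add: algebra_simps)
  moreover have "t * h 0 * w 0 = 0" unfolding h_def by simp
  ultimately show ?thesis by (simp add: sum_subtractf sum_distrib_left)
qed

lemma log_concave_ratio_le:
  fixes w :: "nat \<Rightarrow> real" and r :: real
  assumes pos: "\<And>y. y \<le> L \<Longrightarrow> 0 < w y"
    and lc: "\<And>y. y + 2 \<le> L \<Longrightarrow> w y * w (y + 2) \<le> w (Suc y) ^ 2"
    and first: "w 1 \<le> r * w 0"
  shows "y < L \<Longrightarrow> w (Suc y) \<le> r * w y"
proof (induction y)
  case 0
  thus ?case using first by simp
next
  case (Suc y)
  have pos_y: "0 < w y" "0 < w (Suc y)" using pos Suc.prems by auto
  have "w y * w (Suc (Suc y)) \<le> w (Suc y) * w (Suc y)"
    using lc[of y] Suc.prems by (simp add: numeral_2_eq_2 power2_eq_square)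
  also have "\<dots> \<le> w (Suc y) * (r * w y)"
    using Suc pos_y by (intro mult_left_mono) auto
  finally have "w y * w (Suc (Suc y)) \<le> w y * (r * w (Suc y))" by (simp add: algebra_simps)
  thus ?case using pos_y by (simp add: mult_le_cancel_left_pos)
qed

lemma log_concave_tail_bounds:
  fixes w :: "nat \<Rightarrow> real" and r :: real
  assumes "0 \<le> r" "r < 1" "\<And>y. 0 \<le> w y" "\<And>y. y \<le> L \<Longrightarrow> 0 < w y"
    and "\<And>y. y + 2 \<le> L \<Longrightarrow> w y * w (y + 2) \<le> w (Suc y) ^ 2"
    and "w 1 \<le> r * w 0"
  shows "(\<Sum>y<L. real (Suc y) * w (Suc y)) \<le> r / (1 - r)^2 * w 0"
    and "(1 - r) * (\<Sum>y<L. real (Suc y) * real y * w (Suc y))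
           \<le> 2 * r * (\<Sum>y<L. real (Suc y) * w (Suc y))"
proof -
  have ratio: "\<And>y. y < L \<Longrightarrow> w (Suc y) \<le> r * w y"
    using log_concave_ratio_le[of L w r] assms by blast
  show "(\<Sum>y<L. real (Suc y) * w (Suc y)) \<le> r / (1 - r)^2 * w 0"
    using assms ratio by (intro sum_index_weighted_le_ratio) auto
  show "(1 - r) * (\<Sum>y<L. real (Suc y) * real y * w (Suc y))
           \<le> 2 * r * (\<Sum>y<L. real (Suc y) * w (Suc y))"
    using assms ratio by (intro sum_index_sq_weighted_le_ratio) auto
qed

lemma sum_atLeast0_atMost_split_at:
  fixes g :: "nat \<Rightarrow> real"
  assumes "m \<le> M"
  shows "(\<Sum>k=0..M. g k) = g m + (\<Sum>y<m. g (m - Suc y)) + (\<Sum>y<M - m. g (m + Suc y))"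
proof -
  have split: "{0..M} = {..<m} \<union> insert m {m<..M}" using assms by auto
  have "(\<Sum>k=0..M. g k) = (\<Sum>k<m. g k) + (g m + (\<Sum>k\<in>{m<..M}. g k))"
    unfolding split by (subst sum.union_disjoint) auto
  moreover have "(\<Sum>k<m. g k) = (\<Sum>y<m. g (m - Suc y))" by (rule sum.nat_diff_reindex[symmetric])
  moreover have "(\<Sum>k\<in>{m<..M}. g k) = (\<Sum>y<M - m. g (m + Suc y))"
    by (rule sum.reindex_bij_witness[where j="\<lambda>k. k - m - 1" and i="\<lambda>y. m + Suc y"]) auto
  ultimately show ?thesis by simp
qed

lemma centered_moments_split_at:
  fixes c :: "nat \<Rightarrow> real"
  assumes "m \<le> M"
  shows "(\<Sum>k=0..M. (real k - real m) * c k)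
           = (\<Sum>y<M - m. real (Suc y) * c (m + Suc y)) - (\<Sum>y<m. real (Suc y) * c (m - Suc y))"
    and "(\<Sum>k=0..M. (real k - real m) * (real k - real m - 1) * c k)
           = (\<Sum>y<m. real (Suc y) * real y * c (m - Suc y)) + 2 * (\<Sum>y<m. real (Suc y) * c (m - Suc y))
             + (\<Sum>y<M - m. real (Suc y) * real y * c (m + Suc y))"
proof -
  note split = sum_atLeast0_atMost_split_at[OF assms]
  have "(\<Sum>k=0..M. (real k - real m) * c k)
      = 0 + (\<Sum>y<m. - (real (Suc y) * c (m - Suc y))) + (\<Sum>y<M - m. real (Suc y) * c (m + Suc y))"
    unfolding split by (intro arg_cong2[where f="(+)"] sum.cong refl) (auto simp: of_nat_diff algebra_simps)
  thus "(\<Sum>k=0..M. (real k - real m) * c k)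
           = (\<Sum>y<M - m. real (Suc y) * c (m + Suc y)) - (\<Sum>y<m. real (Suc y) * c (m - Suc y))"
    by (simp add: sum_negf)
  have "(\<Sum>k=0..M. (real k - real m) * (real k - real m - 1) * c k)
      = 0 + (\<Sum>y<m. real (Suc y) * real y * c (m - Suc y) + 2 * (real (Suc y) * c (m - Suc y)))
          + (\<Sum>y<M - m. real (Suc y) * real y * c (m + Suc y))"
    unfolding split by (intro arg_cong2[where f="(+)"] sum.cong refl) (auto simp: of_nat_diff algebra_simps)
  thus "(\<Sum>k=0..M. (real k - real m) * (real k - real m - 1) * c k)
           = (\<Sum>y<m. real (Suc y) * real y * c (m - Suc y)) + 2 * (\<Sum>y<m. real (Suc y) * c (m - Suc y))
             + (\<Sum>y<M - m. real (Suc y) * real y * c (m + Suc y))"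
    by (simp add: sum.distrib sum_distrib_left)
qed

text \<open>\<open>T + q - q\<^sup>2\<close> is the variance. Both tails decay geometrically: to the right of \<open>m\<close>
  with ratio \<open>1/6\<close> by the drop, to the left with ratio \<open>6/25\<close> because the mean \<open>m + q\<close> is at
  least \<open>m\<close>, so the left tail cannot outweigh the right one.\<close>

lemma log_concave_steep_drop_variance_lt:
  fixes c :: "nat \<Rightarrow> real" and m M :: nat and q T :: real
  assumes "m < M"
    and nonneg: "\<And>k. 0 \<le> c k" and pos: "\<And>k. k \<le> M \<Longrightarrow> 0 < c k"
    and lc: "\<And>k. k + 2 \<le> M \<Longrightarrow> c k * c (k + 2) \<le> c (Suc k) ^ 2"
    and total: "(\<Sum>k=0..M. c k) = 1"
    and first: "(\<Sum>k=0..M. (real k - real m) * c k) = q"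
    and second: "(\<Sum>k=0..M. (real k - real m) * (real k - real m - 1) * c k) = T"
    and "0 \<le> q"
    and drop: "6 * c (Suc m) \<le> c m"
  shows "T + q - q^2 < 3/4"
proof -
  define w where "w y = c (m + y)" for y
  define u where "u y = c (m - y)" for y
  define A where "A = (\<Sum>y<M - m. real (Suc y) * w (Suc y))"
  define TR where "TR = (\<Sum>y<M - m. real (Suc y) * real y * w (Suc y))"
  define B where "B = (\<Sum>y<m. real (Suc y) * u (Suc y))"
  define TL where "TL = (\<Sum>y<m. real (Suc y) * real y * u (Suc y))"
  have qAB: "q = A - B" and TT: "T = TL + 2 * B + TR"
    using centered_moments_split_at[of m M c] assms(1) first second
    unfolding A_def B_def TL_def TR_def w_def u_def by simp_all
  have cm: "c m \<le> 1"
    using member_le_sum[of m "{0..M}" c] nonneg assms(1) total by simp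
  have "A \<le> (1/6) / (1 - 1/6)^2 * w 0" and "(1 - 1/6) * TR \<le> 2 * (1/6) * A"
    unfolding A_def TR_def
    using nonneg pos lc drop assms(1)
    by (intro log_concave_tail_bounds; force simp: w_def add.assoc)+
  hence A: "A \<le> 6/25 * c m" and TR: "TR \<le> 2/5 * A"
    unfolding w_def by (simp_all add: power2_eq_square)
  have "(1 - 6/25) * TL \<le> 2 * (6/25) * B"
  proof (cases "m = 0")
    case False
    hence "real (Suc 0) * u (Suc 0) \<le> B"
      unfolding B_def using nonneg by (intro member_le_sum) (auto simp: u_def)
    hence u1: "u 1 \<le> 6/25 * u 0" using qAB \<open>0 \<le> q\<close> A unfolding u_def by simp
    have u_lc: "u y * u (y + 2) \<le> u (Suc y) ^ 2" if "y + 2 \<le> m" for y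
    proof -
      have "m - y = (m - (y + 2)) + 2" "m - Suc y = Suc (m - (y + 2))" using that by auto
      thus ?thesis using lc[of "m - (y + 2)"] assms(1) unfolding u_def by (simp add: mult.commute)
    qed
    show ?thesis
      unfolding TL_def B_def using nonneg pos assms(1) u_lc u1
      by (intro log_concave_tail_bounds(2)) (auto simp: u_def)
  qed (simp add: TL_def B_def)
  hence "T + q \<le> 73/100" using TT TR A cm qAB \<open>0 \<le> q\<close> by simp
  moreover have "0 \<le> q^2" by simp
  ultimately show ?thesis by linarith
qed

lemma poisson_binomial_variance_lt_of_drop:
  assumes "finite U" "\<And>i. i \<in> U \<Longrightarrow> 0 < p i \<and> p i < 1"
    and "m < card U" "real m \<le> (\<Sum>i\<in>U. p i)"
    and "6 * poisson_binomial p U (int m + 1) \<le> poisson_binomial p U (int m)"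
  shows "(\<Sum>i\<in>U. p i * (1 - p i)) < 3/4"
proof -
  define c where "c k = poisson_binomial p U (int k)" for k
  define q where "q = (\<Sum>i\<in>U. p i) - real m"
  define T where "T = (\<Sum>k=0..card U. (real k - real m) * (real k - real m - 1) * c k)"
  note moments = poisson_binomial_moments[OF assms(1), of p, folded c_def]
  have "(\<Sum>k=0..card U. (real k - real m) * c k)
      = (\<Sum>k=0..card U. real k * c k) - real m * (\<Sum>k=0..card U. c k)"
    by (simp add: sum_subtractf sum_distrib_left left_diff_distrib)
  hence first: "(\<Sum>k=0..card U. (real k - real m) * c k) = q"
    unfolding moments q_def by simp
  have "T = (\<Sum>k=0..card U. real k ^ 2 * c k - (2 * real m + 1) * (real k * c k)
                            + real m * (real m + 1) * c k)"
    unfolding T_def by (rule sum.cong) (simp_all add: algebra_simps power2_eq_square)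
  also have "\<dots> = (\<Sum>k=0..card U. real k ^ 2 * c k) - (2 * real m + 1) * (\<Sum>k=0..card U. real k * c k)
                  + real m * (real m + 1) * (\<Sum>k=0..card U. c k)"
    by (simp only: sum.distrib sum_subtractf sum_distrib_left)
  finally have "T + q - q^2 = (\<Sum>i\<in>U. p i * (1 - p i))"
    unfolding moments q_def by (simp add: algebra_simps power2_eq_square)
  moreover have "T + q - q^2 < 3/4"
  proof (rule log_concave_steep_drop_variance_lt[OF assms(3) _ _ _ moments(1) first T_def[symmetric]])
    show "0 \<le> c k" for k unfolding c_def by (rule poisson_binomial_nonneg) (use assms(2) in force)
    show "0 < c k" if "k \<le> card U" for k
      unfolding c_def using that by (intro poisson_binomial_pos assms(1,2)) auto
    show "c k * c (k + 2) \<le> c (Suc k) ^ 2" for k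
      using poisson_binomial_log_concave[OF assms(1,2), where k = "int k + 1"]
      unfolding c_def by (simp add: add.commute)
    show "0 \<le> q" using assms(4) unfolding q_def by simp
    show "6 * c (Suc m) \<le> c m" using assms(5) unfolding c_def by (simp add: add.commute)
  qed
  ultimately show ?thesis by simp
qed

section \<open>The ratio of consecutive Poisson-binomial probabilities\<close>

lemma poisson_binomial_remove:
  assumes "finite U" "j \<in> U"
  shows "poisson_binomial p U k
           = p j * poisson_binomial p (U - {j}) (k - 1) + (1 - p j) * poisson_binomial p (U - {j}) k"
  using poisson_binomial_insert[of "U - {j}" j p k] assms by (simp add: insert_absorb)

lemma mixture_increment_le:
  fixes s u v w y z :: real
  assumes "0 < s" "s < 1" and lc: "u * w \<le> v^2"
    and y: "y = s * v + (1 - s) * w" and z: "z = s * u + (1 - s) * v" and "0 < y" "0 \<le> z"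
  shows "y * (z / y - 1) / ((1 - s) + s * (z / y)) \<le> v - w"
proof -
  define D where "D = (1 - s) * y + s * z"
  have "0 < D" unfolding D_def using assms by (simp add: add_pos_nonneg)
  have "(1 - s) + s * (z / y) = D / y" "y * (z / y - 1) = z - y"
    unfolding D_def using \<open>0 < y\<close> by (simp_all add: field_simps)
  hence lhs: "y * (z / y - 1) / ((1 - s) + s * (z / y)) = y * (z - y) / D"
    using \<open>0 < y\<close> \<open>0 < D\<close> by simp
  have "(v - w) * D - y * (z - y) = s * (v^2 - u * w)"
    unfolding D_def y z by (simp add: algebra_simps power2_eq_square)
  hence "y * (z - y) \<le> (v - w) * D" using assms by (smt (verit) mult_nonneg_nonneg)
  thus ?thesis unfolding lhs using \<open>0 < D\<close> by (simp add: pos_divide_le_eq)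
qed

lemma mixture_increment_ge:
  fixes s u v w y z :: real
  assumes "0 < s" "s < 1" and lc: "u * w \<le> v^2"
    and y: "y = s * v + (1 - s) * w" and z: "z = s * u + (1 - s) * v" and "0 < y" "0 \<le> z"
  shows "u - v \<le> z * (z / y - 1) / ((1 - s) + s * (z / y))"
proof -
  define D where "D = (1 - s) * y + s * z"
  have "0 < D" unfolding D_def using assms by (simp add: add_pos_nonneg)
  have "(1 - s) + s * (z / y) = D / y" "z * (z / y - 1) = z * (z - y) / y"
    unfolding D_def using \<open>0 < y\<close> by (simp_all add: field_simps)
  hence rhs: "z * (z / y - 1) / ((1 - s) + s * (z / y)) = z * (z - y) / D"
    using \<open>0 < y\<close> \<open>0 < D\<close> by simp
  have "z * (z - y) - (u - v) * D = (1 - s) * (v^2 - u * w)"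
    unfolding D_def y z by (simp add: algebra_simps power2_eq_square)
  hence "(u - v) * D \<le> z * (z - y)" using assms by (smt (verit) mult_nonneg_nonneg)
  thus ?thesis unfolding rhs using \<open>0 < D\<close> by (simp add: pos_le_divide_eq)
qed

text \<open>For \<open>x = c (k - 1) / c k\<close> with \<open>c = poisson_binomial p U\<close>, the \<open>j\<close>-th summand is the
  \<open>j\<close>-th term of \<open>poisson_binomial_mean_identity\<close> divided by \<open>c k\<close> as it would be if the
  law leaving out \<open>j\<close> were geometric. Log-concavity makes it an under-estimate at \<open>k\<close> and an
  over-estimate at \<open>k - 1\<close>.\<close>

definition ratio_score :: "(nat \<Rightarrow> real) \<Rightarrow> nat set \<Rightarrow> real \<Rightarrow> real" where
  "ratio_score p U x = (\<Sum>j\<in>U. p j * (1 - p j) * ((x - 1) / ((1 - p j) + p j * x)))"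

lemma poisson_binomial_ratio_score_bounds:
  fixes k :: int
  assumes "finite U" "\<And>i. i \<in> U \<Longrightarrow> 0 < p i \<and> p i < 1" "0 < k" "k \<le> int (card U)"
  defines "x \<equiv> poisson_binomial p U (k - 1) / poisson_binomial p U k"
  shows "ratio_score p U x \<le> of_int k - (\<Sum>i\<in>U. p i)"
    and "of_int k - 1 - (\<Sum>i\<in>U. p i) \<le> ratio_score p U x"
proof -
  let ?c = "poisson_binomial p U" and ?c' = "\<lambda>j. poisson_binomial p (U - {j})"
  have ck: "0 < ?c k" and ck1: "0 < ?c (k - 1)"
    using assms by (auto intro!: poisson_binomial_pos)
  have rec: "?c t = p j * ?c' j (t - 1) + (1 - p j) * ?c' j t" if "j \<in> U" for j t
    using poisson_binomial_remove[OF assms(1) that] .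
  have lc: "?c' j (k - 1 - 1) * ?c' j k \<le> ?c' j (k - 1) ^ 2" if "j \<in> U" for j
    using poisson_binomial_log_concave[of "U - {j}" p "k - 1"] assms(1,2) by simp
  have weight: "0 \<le> p j * (1 - p j)" if "j \<in> U" for j using assms(2)[OF that] by simp
  have "?c k * ratio_score p U x = (\<Sum>j\<in>U. p j * (1 - p j) * (?c k * ((x - 1) / ((1 - p j) + p j * x))))"
    unfolding ratio_score_def by (simp add: sum_distrib_left algebra_simps)
  also have "\<dots> \<le> (\<Sum>j\<in>U. p j * (1 - p j) * (?c' j (k - 1) - ?c' j k))"
  proof (intro sum_mono mult_left_mono weight)
    fix j assume j: "j \<in> U"
    show "?c k * ((x - 1) / ((1 - p j) + p j * x)) \<le> ?c' j (k - 1) - ?c' j k"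
      using mixture_increment_le[OF _ _ lc[OF j] rec[OF j] rec[OF j] ck less_imp_le[OF ck1]] assms(2)[OF j]
      unfolding x_def by simp
  qed
  also have "\<dots> = (of_int k - (\<Sum>i\<in>U. p i)) * ?c k"
    by (rule poisson_binomial_mean_identity[OF assms(1), symmetric])
  finally show "ratio_score p U x \<le> of_int k - (\<Sum>i\<in>U. p i)"
    using ck by (simp add: mult.commute)
  have "(of_int (k - 1) - (\<Sum>i\<in>U. p i)) * ?c (k - 1)
      = (\<Sum>j\<in>U. p j * (1 - p j) * (?c' j (k - 1 - 1) - ?c' j (k - 1)))"
    by (rule poisson_binomial_mean_identity[OF assms(1)])
  also have "\<dots> \<le> (\<Sum>j\<in>U. p j * (1 - p j) * (?c (k - 1) * ((x - 1) / ((1 - p j) + p j * x))))"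
  proof (intro sum_mono mult_left_mono weight)
    fix j assume j: "j \<in> U"
    show "?c' j (k - 1 - 1) - ?c' j (k - 1) \<le> ?c (k - 1) * ((x - 1) / ((1 - p j) + p j * x))"
      using mixture_increment_ge[OF _ _ lc[OF j] rec[OF j] rec[OF j] ck less_imp_le[OF ck1]] assms(2)[OF j]
      unfolding x_def by simp
  qed
  also have "\<dots> = ?c (k - 1) * ratio_score p U x"
    unfolding ratio_score_def by (simp add: sum_distrib_left algebra_simps)
  finally show "of_int k - 1 - (\<Sum>i\<in>U. p i) \<le> ratio_score p U x"
    using ck1 by (simp add: mult.commute)
qed

lemma ratio_score_le_of_le_1:
  assumes "\<And>j. j \<in> U \<Longrightarrow> 0 < p j \<and> p j < 1" "0 < x" "x \<le> 1"
  shows "ratio_score p U x \<le> (\<Sum>j\<in>U. p j * (1 - p j)) * (x - 1)"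
  unfolding ratio_score_def sum_distrib_right
proof (rule sum_mono)
  fix j assume "j \<in> U"
  hence pj: "0 < p j" "p j < 1" using assms(1) by auto
  have D: "0 < (1 - p j) + p j * x" "(1 - p j) + p j * x \<le> 1"
    using pj assms(2,3) by (auto simp: add_pos_nonneg mult_left_le)
  have "(x - 1) * (1 - ((1 - p j) + p j * x)) \<le> 0"
    using assms(3) D by (intro mult_nonpos_nonneg) auto
  hence "x - 1 \<le> (x - 1) * ((1 - p j) + p j * x)" by (simp add: algebra_simps)
  hence "(x - 1) / ((1 - p j) + p j * x) \<le> x - 1" using D by (simp add: divide_le_eq)
  thus "p j * (1 - p j) * ((x - 1) / ((1 - p j) + p j * x)) \<le> p j * (1 - p j) * (x - 1)"
    using pj by (intro mult_left_mono) auto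
qed

lemma ratio_score_ge_of_ge_1:
  assumes "\<And>j. j \<in> U \<Longrightarrow> 0 < p j \<and> p j < 1" "1 \<le> x"
  shows "(\<Sum>j\<in>U. p j * (1 - p j)) * ((x - 1) / x) \<le> ratio_score p U x"
  unfolding ratio_score_def sum_distrib_right
proof (rule sum_mono)
  fix j assume "j \<in> U"
  hence pj: "0 < p j" "p j < 1" using assms(1) by auto
  have "(1 - p j) * 1 \<le> (1 - p j) * x" using pj assms(2) by (intro mult_left_mono) auto
  hence "(1 - p j) + p j * x \<le> x" by (simp add: algebra_simps)
  moreover have "0 < (1 - p j) + p j * x" using pj assms(2) by (simp add: add_pos_nonneg)
  ultimately have "(x - 1) / x \<le> (x - 1) / ((1 - p j) + p j * x)"
    using assms(2) by (intro divide_left_mono) auto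
  thus "p j * (1 - p j) * ((x - 1) / x) \<le> p j * (1 - p j) * ((x - 1) / ((1 - p j) + p j * x))"
    using pj by (intro mult_left_mono) auto
qed

lemma diff_one_mult_le_of_score_bound:
  fixes x t v :: real
  assumes "1 \<le> x" "0 < t" "t < 1" "6/5 \<le> v + t * (1 - t)"
    and "v * ((x - 1) / x) \<le> t"
  shows "(x - 1) * (v + t * (1 - t)) \<le> 6"
proof -
  define d where "d = v + t * (1 - t)"
  have gap: "(x - 1) * (v - t) \<le> t"
    using assms(1,5) by (simp add: divide_le_eq algebra_simps)
  have "6 * (v - t) - t * d = 6 * (1 - t)^2 - 6 + d * (6 - t)"
    unfolding d_def by (simp add: algebra_simps power2_eq_square)
  moreover have "6/5 * 5 \<le> d * (6 - t)" using assms(3,4) unfolding d_def by (intro mult_mono) auto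
  moreover have "0 \<le> 6 * (1 - t)^2" by simp
  ultimately have "t * d \<le> 6 * (v - t)" by linarith
  hence "(x - 1) * (t * d) \<le> (x - 1) * (6 * (v - t))"
    using assms(1) by (intro mult_left_mono) auto
  also have "\<dots> = 6 * ((x - 1) * (v - t))" by simp
  also have "\<dots> \<le> 6 * t" using gap by linarith
  finally have "t * ((x - 1) * d) \<le> t * 6" by (simp only: mult_ac)
  thus ?thesis using assms(2) unfolding d_def by simp
qed

lemma abs_one_minus_le_of_score_bounds:
  fixes x t v :: real
  assumes "0 < x" "0 < t" "t < 1" and d: "1 \<le> v + t * (1 - t)"
    and below: "x < 1 \<Longrightarrow> t - 1 \<le> v * (x - 1)"
    and above: "1 \<le> x \<Longrightarrow> v * ((x - 1) / x) \<le> t"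
    and steep: "6 \<le> x \<Longrightarrow> v < 3/4"
  shows "\<bar>1 - x\<bar> \<le> 6 / (v + t * (1 - t))"
proof -
  define d where "d = v + t * (1 - t)"
  have "0 \<le> (t - 1/2)^2" by simp
  hence "t * (1 - t) \<le> 1/4" by (simp add: power2_eq_square algebra_simps)
  have "\<bar>1 - x\<bar> * d \<le> 6"
  proof (cases "x < 1")
    case True
    have "(1 - x) * (t * (1 - t)) \<le> 1 * (t * (1 - t))"
      using assms(1-3) by (intro mult_right_mono) auto
    moreover have "\<bar>1 - x\<bar> * d = - (v * (x - 1)) + (1 - x) * (t * (1 - t))"
      using True unfolding d_def by (simp add: algebra_simps)
    ultimately show ?thesis using below[OF True] \<open>t * (1 - t) \<le> 1/4\<close> \<open>0 < t\<close> by linarith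
  next
    case False
    hence "1 \<le> x" by simp
    show ?thesis
    proof (cases "6/5 \<le> d")
      case True
      thus ?thesis
        using diff_one_mult_le_of_score_bound[OF \<open>1 \<le> x\<close> assms(2,3) _ above[OF \<open>1 \<le> x\<close>]]
          \<open>1 \<le> x\<close> unfolding d_def by simp
    next
      case False
      have "x < 6"
      proof (rule ccontr)
        assume "\<not> x < 6"
        hence "v < 3/4" using steep by simp
        thus False using d \<open>t * (1 - t) \<le> 1/4\<close> by linarith
      qed
      hence "(x - 1) * d \<le> 5 * d" using d unfolding d_def by (intro mult_right_mono) auto
      thus ?thesis using False \<open>1 \<le> x\<close> by simp
    qed
  qed
  thus ?thesis using d unfolding d_def by (simp add: le_divide_eq)
qed

lemma poisson_binomial_ratio_bound:
  fixes n :: nat and t :: real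
  assumes "finite U" "\<And>i. i \<in> U \<Longrightarrow> 0 < p i \<and> p i < 1" "1 \<le> n" "n \<le> card U"
    and "0 < t" "t < 1" and mean: "(\<Sum>i\<in>U. p i) = real n - t"
    and "1 \<le> (\<Sum>i\<in>U. p i * (1 - p i)) + t * (1 - t)"
  shows "\<bar>1 - poisson_binomial p U (int n - 1) / poisson_binomial p U (int n)\<bar>
           \<le> 6 / ((\<Sum>i\<in>U. p i * (1 - p i)) + t * (1 - t))"
proof (rule abs_one_minus_le_of_score_bounds)
  let ?c = "poisson_binomial p U"
  have pos: "0 < ?c (int n)" "0 < ?c (int n - 1)"
    using assms(1-4) by (auto intro!: poisson_binomial_pos)
  thus x_pos: "0 < ?c (int n - 1) / ?c (int n)" by simp
  have score: "ratio_score p U (?c (int n - 1) / ?c (int n)) \<le> t"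
    "t - 1 \<le> ratio_score p U (?c (int n - 1) / ?c (int n))"
    using poisson_binomial_ratio_score_bounds[where p = p and U = U and k = "int n", OF assms(1,2)] assms(3,4) mean
    by auto
  show "t - 1 \<le> (\<Sum>i\<in>U. p i * (1 - p i)) * (?c (int n - 1) / ?c (int n) - 1)"
    if "?c (int n - 1) / ?c (int n) < 1"
    using score(2) ratio_score_le_of_le_1[where p = p and U = U, OF assms(2) x_pos less_imp_le[OF that]]
    by linarith
  show "(\<Sum>i\<in>U. p i * (1 - p i)) * ((?c (int n - 1) / ?c (int n) - 1) / (?c (int n - 1) / ?c (int n))) \<le> t"
    if "1 \<le> ?c (int n - 1) / ?c (int n)"
    using score(1) ratio_score_ge_of_ge_1[where p = p and U = U, OF assms(2) that] by linarith
  show "(\<Sum>i\<in>U. p i * (1 - p i)) < 3/4" if "6 \<le> ?c (int n - 1) / ?c (int n)"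
  proof (rule poisson_binomial_variance_lt_of_drop[where m = "n - 1"])
    have "int (n - 1) + 1 = int n" "int (n - 1) = int n - 1" using assms(3) by auto
    thus "6 * ?c (int (n - 1) + 1) \<le> ?c (int (n - 1))"
      using that pos by (simp add: pos_le_divide_eq mult.commute)
  qed (use assms(1-6) mean in \<open>auto simp: of_nat_diff\<close>)
qed (use assms in auto)

lemma rej_incl_eq:
  fixes N n :: nat and p :: "nat \<Rightarrow> real"
  assumes "i \<in> {1..N}"
  defines "c \<equiv> poisson_binomial p ({1..N} - {i})"
  shows "rej_incl N n p i = p i * c (int n - 1) / (p i * c (int n - 1) + (1 - p i) * c (int n))"
proof -
  define U where "U = {1..N} - {i}"
  have U: "finite U" "i \<notin> U" "insert i U = {1..N}" unfolding U_def using assms(1) by auto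
  have Z: "(\<Sum>t\<in>rej_samples N n. rej_weight N p t) = p i * c (int n - 1) + (1 - p i) * c (int n)"
    using poisson_binomial_insert[OF U(1,2), of p "int n"] U(3)
    unfolding rej_samples_def poisson_binomial_def rej_weight_def subset_weight_def c_def U_def
    by simp
  have S: "{s \<in> rej_samples N n. i \<in> s} = {s. s \<subseteq> insert i U \<and> int (card s) = int n \<and> i \<in> s}"
    unfolding rej_samples_def U(3) by auto
  have "rej_incl N n p i
      = (\<Sum>s\<in>{s \<in> rej_samples N n. i \<in> s}. subset_weight p (insert i U) s)
          / (\<Sum>t\<in>rej_samples N n. rej_weight N p t)"
    unfolding rej_incl_def rej_prob_def sum_divide_distrib U(3)
    by (rule sum.cong) (auto simp: rej_weight_def subset_weight_def)
  also have "\<dots> = p i * c (int n - 1) / (p i * c (int n - 1) + (1 - p i) * c (int n))"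
    using sum_subset_weight_containing[OF U(1,2), where k = "int n" and p = p] unfolding S Z by (simp add: c_def U_def)
  finally show ?thesis .
qed

lemma inverse_mixture_gap:
  fixes s a b D :: real
  assumes "0 < s" "0 < a" "0 < b" "D = s * a + (1 - s) * b" "0 < D"
  shows "1 / (s * a / D) - 1 / s = (1 - s * a / D) / (s * a / D) * (1 - a / b)"
proof -
  have "D - a = (1 - s) * (b - a)" "D - s * a = (1 - s) * b" using assms(4) by (simp_all add: algebra_simps)
  have "1 / (s * a / D) - 1 / s = (D - a) / (s * a)"
    using assms by (simp add: field_simps)
  also have "\<dots> = (1 - s) * b / (s * a) * (1 - a / b)"
    unfolding \<open>D - a = (1 - s) * (b - a)\<close> using assms by (simp add: field_simps)
  also have "(1 - s) * b / (s * a) = (D - s * a) / (s * a)" unfolding \<open>D - s * a = (1 - s) * b\<close> ..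
  also have "\<dots> = (1 - s * a / D) / (s * a / D)" using assms by (simp add: field_simps)
  finally show ?thesis .
qed

lemma rej_incl_inverse_gap:
  fixes N n i :: nat and p :: "nat \<Rightarrow> real"
  defines "c \<equiv> poisson_binomial p ({1..N} - {i})"
  assumes "i \<in> {1..N}" "0 < p i" "p i < 1" "0 < c (int n - 1)" "0 < c (int n)"
  shows "0 \<le> (1 - rej_incl N n p i) / rej_incl N n p i"
    and "1 / rej_incl N n p i - 1 / p i
           = (1 - rej_incl N n p i) / rej_incl N n p i * (1 - c (int n - 1) / c (int n))"
proof -
  define D where "D = p i * c (int n - 1) + (1 - p i) * c (int n)"
  have "0 < D" "p i * c (int n - 1) \<le> D" unfolding D_def using assms(3-6) by (simp_all add: add_pos_pos)
  have incl: "rej_incl N n p i = p i * c (int n - 1) / D"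
    using rej_incl_eq[OF assms(2)] unfolding c_def D_def .
  have "0 < rej_incl N n p i" "rej_incl N n p i \<le> 1"
    unfolding incl using assms(3,5) \<open>0 < D\<close> \<open>p i * c (int n - 1) \<le> D\<close> by simp_all
  thus "0 \<le> (1 - rej_incl N n p i) / rej_incl N n p i" by simp
  show "1 / rej_incl N n p i - 1 / p i
           = (1 - rej_incl N n p i) / rej_incl N n p i * (1 - c (int n - 1) / c (int n))"
    unfolding incl by (rule inverse_mixture_gap) (use assms(3,5,6) \<open>0 < D\<close> D_def in auto)
qed

lemma leave_one_out_ratio_bound:
  fixes N n i :: nat and p :: "nat \<Rightarrow> real"
  defines "c \<equiv> poisson_binomial p ({1..N} - {i})"
  assumes "1 \<le> n" "\<And>i. i \<in> {1..N} \<Longrightarrow> 0 < p i \<and> p i < 1"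
    and "(\<Sum>i=1..N. p i) = real n" "1 \<le> (\<Sum>i=1..N. p i * (1 - p i))" "i \<in> {1..N}"
  shows "0 < c (int n - 1)" "0 < c (int n)"
    and "\<bar>1 - c (int n - 1) / c (int n)\<bar> \<le> 6 / (\<Sum>j=1..N. p j * (1 - p j))"
proof -
  define U where "U = {1..N} - {i}"
  have U: "finite U" "i \<notin> U" "insert i U = {1..N}" "card U = N - 1"
    unfolding U_def using assms(6) by auto
  have pU: "\<And>j. j \<in> U \<Longrightarrow> 0 < p j \<and> p j < 1" and pi: "0 < p i" "p i < 1"
    using assms(3,6) unfolding U_def by auto
  have split: "(\<Sum>j=1..N. f j) = f i + (\<Sum>j\<in>U. f j)" for f :: "nat \<Rightarrow> real"
    using sum.insert[OF U(1,2), of f] U(3) by simp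
  have "n < N"
    using sum_strict_mono_ex1[of "{1..N}" p "\<lambda>_. 1"] assms(3,4,6) by fastforce
  show "0 < c (int n - 1)" "0 < c (int n)"
    unfolding c_def U_def[symmetric] using U(1,4) pU assms(2) \<open>n < N\<close>
    by (auto intro!: poisson_binomial_pos)
  have mean: "(\<Sum>j\<in>U. p j) = real n - p i" using split[of p] assms(4) by simp
  have var: "(\<Sum>j=1..N. p j * (1 - p j)) = (\<Sum>j\<in>U. p j * (1 - p j)) + p i * (1 - p i)"
    using split[of "\<lambda>j. p j * (1 - p j)"] by simp
  show "\<bar>1 - c (int n - 1) / c (int n)\<bar> \<le> 6 / (\<Sum>j=1..N. p j * (1 - p j))"
    unfolding var c_def U_def[symmetric]
    by (rule poisson_binomial_ratio_bound[where p = p])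
      (use U(1,4) pU assms(2,5) pi \<open>n < N\<close> mean var in auto)
qed

theorem mainTheorem6:
  fixes N n :: nat and p :: "nat \<Rightarrow> real"
  assumes "1 \<le> n" and "n \<le> N"
    and "\<And>i. i \<in> {1..N} \<Longrightarrow> 0 < p i \<and> p i < 1"
    and "(\<Sum>i=1..N. p i) = real n"
    and "(\<Sum>i=1..N. p i * (1 - p i)) \<ge> 1"
    and "i \<in> {1..N}"
  shows "\<bar>1 / rej_incl N n p i - 1 / p i\<bar>
           \<le> 6 / (\<Sum>j=1..N. p j * (1 - p j))
             * ((1 - rej_incl N n p i) / rej_incl N n p i)"
proof -
  let ?c = "poisson_binomial p ({1..N} - {i})" and ?K = "(1 - rej_incl N n p i) / rej_incl N n p i"
  note ratio = leave_one_out_ratio_bound[OF assms(1,3,4,5,6)]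
  have "0 < p i" "p i < 1" using assms(3,6) by auto
  note gap = rej_incl_inverse_gap[OF assms(6) this ratio(1,2)]
  have "\<bar>1 / rej_incl N n p i - 1 / p i\<bar> = ?K * \<bar>1 - ?c (int n - 1) / ?c (int n)\<bar>"
    by (simp only: gap(2) abs_mult abs_of_nonneg[OF gap(1)])
  also have "\<dots> \<le> ?K * (6 / (\<Sum>j=1..N. p j * (1 - p j)))"
    by (rule mult_left_mono[OF ratio(3) gap(1)])
  finally show ?thesis by (simp only: mult.commute)
qed

end
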